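(* Let $m\geq 2$ and let $\mathbb{H}^m=(B^m,g)$ be the hyperbolic space, where $B^m$ is the open unit ball of $\mathbb{R}^m$ centred at $0$ and $g=4|dx|^2/(1-|x|^2)^2$. Let $r(x)=\log\left(\frac{1+|x|}{1-|x|}\right)$ be the $g$-distance from $x$ to $0$. Let $c\in\mathbb{R}$ be any constant and define $f_c:\mathbb{H}^m\to\mathbb{R}$ by \[ f_c(x)=\int_0^{r(x)}\frac{A_c(s)}{\sqrt{1+A_c(s)^2}}\,ds,\qquad A_c(s)=\frac{c}{(\sinh s)^{m-1}}\int_0^s(\sinh t)^{m-1}\,dt . \] Then $f_c$ is smooth on all of $\mathbb{H}^m$, and for each $d\in\mathbb{R}$ the graph $\Gamma_{f_c+d}\subset\mathbb{H}^m\times\mathbb{R}$ is a spacelike hypersurface of the Lorentzian product $(\mathbb{H}^m\times\mathbb{R},\,g-dt^2)$ with constant mean curvature $\langle H,\nu\rangle=\frac{c}{m}$. Furthermore, $\{\Gamma_{f_c+d}(x):\ x\in\mathbb{H}^m,\ d\in\mathbb{R}\}$ defines a foliation of $\mathbb{H}^m\times\mathbb{R}$ by hypersurfaces of constant mean curvature.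
   Context: For $f:M\to\mathbb{R}$, $\Gamma_f(x)=(x,f(x))$ and $\Gamma_f$ also denotes its image. The graph is spacelike iff the induced metric $g-df\otimes df$ is Riemannian, i.e. $\|\nabla f\|_g<1$. $H$ is the mean curvature vector (trace of the second fundamental form divided by $m$), $\langle\cdot,\cdot\rangle$ is the metric $g-dt^2$, and $\nu=-\frac{(\nabla f,1)}{\sqrt{1-\|\nabla f\|^2}}$ is the unit timelike normal of the graph of $f=f_c+d$, where $\nabla f$ is the $g$-gradient and $1=\partial_t$. *)

theory Defs
  imports "HOL-Analysis.Analysis"
begin

fun ddir :: "('a::real_normed_vector \<Rightarrow> 'b::real_normed_vector) \<Rightarrow> 'a list \<Rightarrow> 'a \<Rightarrow> 'b" where
  "ddir f [] = f"
| "ddir f (v # vs) = (\<lambda>x. frechet_derivative (ddir f vs) (at x) v)"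

definition smooth_on :: "'a::real_normed_vector set \<Rightarrow> ('a \<Rightarrow> 'b::real_normed_vector) \<Rightarrow> bool" where
  "smooth_on S f \<longleftrightarrow> (\<forall>vs. ddir f vs differentiable_on S)"

definition ball_model :: "(real^'m) set" where
  "ball_model = ball 0 1"

definition hyp_metric :: "real^'m \<Rightarrow> real^'m \<Rightarrow> real^'m \<Rightarrow> real" where
  "hyp_metric x u v = 4 * (u \<bullet> v) / (1 - (norm x)\<^sup>2)\<^sup>2"

definition hyp_dist0 :: "real^'m \<Rightarrow> real" where
  "hyp_dist0 x = ln ((1 + norm x) / (1 - norm x))"

definition lor_metric :: "(real^'m) \<times> real \<Rightarrow> (real^'m) \<times> real \<Rightarrow> (real^'m) \<times> real \<Rightarrow> real" where
  "lor_metric p u v = hyp_metric (fst p) (fst u) (fst v) - snd u * snd v"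

text \<open>G p u v is the metric at p applied to the (constant coordinate) vectors u, v.
  The Christoffel map is determined by the Koszul formula for constant vector fields.\<close>
definition christoffel ::
  "('a::euclidean_space \<Rightarrow> 'a \<Rightarrow> 'a \<Rightarrow> real) \<Rightarrow> 'a \<Rightarrow> 'a \<Rightarrow> 'a \<Rightarrow> 'a" where
  "christoffel G p u v = (THE z. \<forall>w. G p z w =
      (frechet_derivative (\<lambda>q. G q v w) (at p) u
     + frechet_derivative (\<lambda>q. G q u w) (at p) v
     - frechet_derivative (\<lambda>q. G q u v) (at p) w) / 2)"

definition cov_deriv_imm ::
  "('a::euclidean_space \<Rightarrow> 'a \<Rightarrow> 'a \<Rightarrow> real) \<Rightarrow> ('b::euclidean_space \<Rightarrow> 'a) \<Rightarrow> 'b \<Rightarrow> 'b \<Rightarrow> 'b \<Rightarrow> 'a" where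
  "cov_deriv_imm G F x u v =
     frechet_derivative (\<lambda>y. frechet_derivative F (at y) v) (at x) u
     + christoffel G (F x) (frechet_derivative F (at x) u) (frechet_derivative F (at x) v)"

definition graph_map :: "(real^'m \<Rightarrow> real) \<Rightarrow> real^'m \<Rightarrow> (real^'m) \<times> real" where
  "graph_map f x = (x, f x)"

definition induced_metric :: "(real^'m \<Rightarrow> real) \<Rightarrow> real^'m \<Rightarrow> real^'m^'m" where
  "induced_metric f x = (\<chi> i j. lor_metric (graph_map f x)
       (frechet_derivative (graph_map f) (at x) (axis i 1))
       (frechet_derivative (graph_map f) (at x) (axis j 1)))"

definition spacelike_graph :: "(real^'m \<Rightarrow> real) \<Rightarrow> bool" where
  "spacelike_graph f \<longleftrightarrow> (\<forall>x\<in>ball_model. \<forall>u. u \<noteq> 0 \<longrightarrow>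
      lor_metric (graph_map f x) (frechet_derivative (graph_map f) (at x) u)
                                 (frechet_derivative (graph_map f) (at x) u) > 0)"

definition hyp_grad :: "(real^'m \<Rightarrow> real) \<Rightarrow> real^'m \<Rightarrow> real^'m" where
  "hyp_grad f x = ((1 - (norm x)\<^sup>2)\<^sup>2 / 4) *\<^sub>R (\<chi> i. frechet_derivative f (at x) (axis i 1))"

definition hyp_grad_norm :: "(real^'m \<Rightarrow> real) \<Rightarrow> real^'m \<Rightarrow> real" where
  "hyp_grad_norm f x = sqrt (hyp_metric x (hyp_grad f x) (hyp_grad f x))"

definition unit_normal :: "(real^'m \<Rightarrow> real) \<Rightarrow> real^'m \<Rightarrow> (real^'m) \<times> real" where
  "unit_normal f x = - ((1 / sqrt (1 - (hyp_grad_norm f x)\<^sup>2)) *\<^sub>R (hyp_grad f x, 1))"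

definition sff :: "(real^'m \<Rightarrow> real) \<Rightarrow> real^'m \<Rightarrow> real^'m \<Rightarrow> real^'m \<Rightarrow> (real^'m) \<times> real" where
  "sff f x u v = (let N = unit_normal f x; p = graph_map f x in
      (lor_metric p (cov_deriv_imm lor_metric (graph_map f) x u v) N / lor_metric p N N) *\<^sub>R N)"

definition mean_curv_vec :: "(real^'m \<Rightarrow> real) \<Rightarrow> real^'m \<Rightarrow> (real^'m) \<times> real" where
  "mean_curv_vec f x = (1 / real CARD('m)) *\<^sub>R
      (\<Sum>i\<in>UNIV. \<Sum>j\<in>UNIV. (matrix_inv (induced_metric f x) $ i $ j) *\<^sub>R sff f x (axis i 1) (axis j 1))"

definition A_fun :: "nat \<Rightarrow> real \<Rightarrow> real \<Rightarrow> real" where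
  "A_fun m c s = c / (sinh s) ^ (m - 1) * integral {0..s} (\<lambda>t. (sinh t) ^ (m - 1))"

definition f_fun :: "real \<Rightarrow> real^'m \<Rightarrow> real" where
  "f_fun c x = integral {0..hyp_dist0 x}
      (\<lambda>s. A_fun CARD('m) c s / sqrt (1 + (A_fun CARD('m) c s)\<^sup>2))"

end

theory Submission
  imports Defs
begin

text \<open>
  Put \<open>s = |x|^2 = tanh^2(r/2)\<close>, where \<open>r\<close> is the distance to the origin. The
  substitution \<open>u = tanh(t/2)\<close> turns the integral of \<open>sinh^(m-1)\<close> into
  \<open>2^(m-1) tanh^m(r/2) J(s)\<close> with \<open>J(q) = \<integral>\<^sub>0\<^sup>1 t^((m-2)/2) (1 - q t)^(-m) dt\<close>, which is smooth
  for \<open>|q| < 1\<close>. Hence \<open>A_c(r) = tanh(r/2) B(s)\<close> with \<open>B\<close> smooth on \<open>(-1,1)\<close>, and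
  \<open>f_c(x) = \<phi>(|x|^2)\<close> where \<open>\<phi>' = B / ((1 - s) sqrt(1 + s B^2))\<close> is smooth on a neighbourhood of
  \<open>[0,1)\<close>; this gives smoothness on the whole ball, the origin included.

  For the graph of \<open>x \<mapsto> \<phi>(|x|^2)\<close> over the Poincare ball, the induced metric and the second
  fundamental form both have the shape \<open>a I + b x x^T\<close> and the Christoffel symbols of
  \<open>g - dt^2\<close> are explicit, so \<open>\<langle>H, \<nu>\<rangle>\<close> has a closed form. For our profile, \<open>m \<langle>H, \<nu>\<rangle>\<close>
  becomes \<open>(1 - s)(B/2 + s B') + (m - 1)(1 + s) B/2\<close>, which is the defining equation
  \<open>(sinh^(m-1) A_c)' = c sinh^(m-1)\<close> written in the variable \<open>s\<close>; it equals \<open>c\<close> by an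
  integration by parts for \<open>J\<close>. The gradient satisfies \<open>|\<nabla>f|^2 = s B^2 / (1 + s B^2) < 1\<close>,
  and the vertical translates of one graph fill the product bijectively.
\<close>

section \<open>Smooth functions of one real variable\<close>

fun Ck_on :: "nat \<Rightarrow> real set \<Rightarrow> (real \<Rightarrow> real) \<Rightarrow> bool" where
  "Ck_on 0 T f = True"
| "Ck_on (Suc k) T f = (\<exists>f'. (\<forall>x\<in>T. (f has_real_derivative f' x) (at x)) \<and> Ck_on k T f')"

definition smooth_real_on :: "real set \<Rightarrow> (real \<Rightarrow> real) \<Rightarrow> bool" where
  "smooth_real_on T f \<longleftrightarrow> (\<forall>k. Ck_on k T f)"

lemma Ck_on_Suc_imp: "Ck_on (Suc k) T f \<Longrightarrow> Ck_on k T f"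
proof (induction k arbitrary: f)
  case (Suc k)
  then obtain f' where "\<forall>x\<in>T. (f has_real_derivative f' x) (at x)" "Ck_on (Suc k) T f'"
    by auto
  with Suc.IH show ?case by auto
qed simp

lemma Ck_on_subset: "S \<subseteq> T \<Longrightarrow> Ck_on k T f \<Longrightarrow> Ck_on k S f"
  by (induction k arbitrary: f) auto

lemma Ck_on_transform:
  assumes "open T" "Ck_on k T f" "\<And>x. x \<in> T \<Longrightarrow> f x = g x"
  shows "Ck_on k T g"
proof (cases k)
  case (Suc j)
  with assms(2) obtain f' where f': "\<forall>x\<in>T. (f has_real_derivative f' x) (at x)" "Ck_on j T f'"
    by auto
  have "\<forall>x\<in>T. (g has_real_derivative f' x) (at x)"
    using f' assms(1,3) has_field_derivative_transform_within_open by metis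
  with f' Suc show ?thesis by auto
qed simp

lemma Ck_on_imp_continuous_on:
  assumes "Ck_on (Suc k) T f"
  shows "continuous_on T f"
proof -
  from assms obtain f' where "\<forall>x\<in>T. (f has_real_derivative f' x) (at x)"
    by auto
  then show ?thesis
    by (intro continuous_at_imp_continuous_on) (use DERIV_isCont in blast)
qed

lemma Ck_on_const: "Ck_on k T (\<lambda>x. a)"
  by (induction k arbitrary: a) (auto intro!: exI[of _ "\<lambda>x. 0"] derivative_eq_intros)

lemma Ck_on_ident: "Ck_on k T (\<lambda>x. x)"
  by (cases k) (auto intro!: exI[of _ "\<lambda>x. 1"] derivative_eq_intros Ck_on_const)

lemma Ck_on_add: "Ck_on k T f \<Longrightarrow> Ck_on k T g \<Longrightarrow> Ck_on k T (\<lambda>x. f x + g x)"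
proof (induction k arbitrary: f g)
  case (Suc k)
  then obtain f' g' where "\<forall>x\<in>T. (f has_real_derivative f' x) (at x)" "Ck_on k T f'"
      "\<forall>x\<in>T. (g has_real_derivative g' x) (at x)" "Ck_on k T g'"
    by auto
  with Suc.IH show ?case
    by (auto intro!: exI[of _ "\<lambda>x. f' x + g' x"] derivative_eq_intros)
qed simp

lemma Ck_on_mult: "Ck_on k T f \<Longrightarrow> Ck_on k T g \<Longrightarrow> Ck_on k T (\<lambda>x. f x * g x)"
proof (induction k arbitrary: f g)
  case (Suc k)
  then obtain f' g' where d: "\<forall>x\<in>T. (f has_real_derivative f' x) (at x)" "Ck_on k T f'"
      "\<forall>x\<in>T. (g has_real_derivative g' x) (at x)" "Ck_on k T g'"
    by auto
  have "Ck_on k T f" "Ck_on k T g"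
    using Suc.prems Ck_on_Suc_imp by blast+
  then have "Ck_on k T (\<lambda>x. f' x * g x + f x * g' x)"
    using Suc.IH d Ck_on_add by blast
  moreover have "\<forall>x\<in>T. ((\<lambda>x. f x * g x) has_real_derivative f' x * g x + f x * g' x) (at x)"
    using d by (auto intro!: derivative_eq_intros)
  ultimately show ?case by auto
qed simp

lemma Ck_on_cmult: "Ck_on k T f \<Longrightarrow> Ck_on k T (\<lambda>x. a * f x)"
  using Ck_on_mult[OF Ck_on_const] by blast

lemma Ck_on_diff: "Ck_on k T f \<Longrightarrow> Ck_on k T g \<Longrightarrow> Ck_on k T (\<lambda>x. f x - g x)"
  using Ck_on_add[of k T f "\<lambda>x. -1 * g x"] Ck_on_cmult[of k T g "-1"] by simp

lemma Ck_on_power: "Ck_on k T f \<Longrightarrow> Ck_on k T (\<lambda>x. f x ^ n)"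
  by (induction n) (auto intro: Ck_on_const Ck_on_mult)

lemma Ck_on_compose:
  "Ck_on k T g \<Longrightarrow> Ck_on k S h \<Longrightarrow> g ` T \<subseteq> S \<Longrightarrow> Ck_on k T (\<lambda>x. h (g x))"
proof (induction k arbitrary: g h)
  case (Suc k)
  then obtain g' h' where d: "\<forall>x\<in>T. (g has_real_derivative g' x) (at x)" "Ck_on k T g'"
      "\<forall>x\<in>S. (h has_real_derivative h' x) (at x)" "Ck_on k S h'"
    by auto
  have "Ck_on k T (\<lambda>x. h' (g x))"
    using Suc Ck_on_Suc_imp d by blast
  then have "Ck_on k T (\<lambda>x. h' (g x) * g' x)"
    using d Ck_on_mult by blast
  moreover have "\<forall>x\<in>T. ((\<lambda>x. h (g x)) has_real_derivative h' (g x) * g' x) (at x)"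
  proof
    fix x assume "x \<in> T"
    with Suc.prems(3) have "g x \<in> S" by blast
    with d \<open>x \<in> T\<close> show "((\<lambda>x. h (g x)) has_real_derivative h' (g x) * g' x) (at x)"
      using DERIV_chain2 by blast
  qed
  ultimately show ?case by auto
qed simp

lemma Ck_on_inverse: "Ck_on k {0<..} (\<lambda>x::real. inverse x)"
proof (induction k)
  case (Suc k)
  have "Ck_on k {0<..} (\<lambda>x::real. - 1 * (inverse x * inverse x))"
    using Suc.IH by (intro Ck_on_cmult Ck_on_mult)
  moreover have "\<forall>x\<in>{0<..}. ((\<lambda>x::real. inverse x) has_real_derivative - 1 * (inverse x * inverse x)) (at x)"
    by (auto intro!: derivative_eq_intros simp: power2_eq_square)
  ultimately show ?case by auto
qed simp

lemma Ck_on_sqrt: "Ck_on k {0<..} (\<lambda>x::real. sqrt x)"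
proof (induction k)
  case (Suc k)
  have "Ck_on k {0<..} (\<lambda>x::real. inverse 2 * inverse (sqrt x))"
    using Ck_on_compose[OF Suc.IH Ck_on_inverse] by (intro Ck_on_cmult) (auto simp: image_subset_iff)
  moreover have "\<forall>x\<in>{0<..}. ((\<lambda>x::real. sqrt x) has_real_derivative inverse 2 * inverse (sqrt x)) (at x)"
    by (auto intro!: derivative_eq_intros simp: field_simps)
  ultimately show ?case by auto
qed simp

lemma Ck_on_divide:
  assumes "Ck_on k T f" "Ck_on k T g" "\<And>x. x \<in> T \<Longrightarrow> g x > 0"
  shows "Ck_on k T (\<lambda>x. f x / g x)"
proof -
  have "Ck_on k T (\<lambda>x. inverse (g x))"
    using Ck_on_compose[OF assms(2) Ck_on_inverse] assms(3) by (auto simp: image_subset_iff)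
  from Ck_on_mult[OF assms(1) this] show ?thesis
    by (simp add: divide_inverse)
qed

lemma Ck_on_sqrt_comp:
  "Ck_on k T g \<Longrightarrow> (\<And>x. x \<in> T \<Longrightarrow> g x > 0) \<Longrightarrow> Ck_on k T (\<lambda>x. sqrt (g x))"
  using Ck_on_compose[OF _ Ck_on_sqrt] by (auto simp: image_subset_iff)

lemma smooth_real_on_deriv:
  assumes "smooth_real_on T g" "open T"
  shows "smooth_real_on T (deriv g)" "\<And>x. x \<in> T \<Longrightarrow> (g has_real_derivative deriv g x) (at x)"
proof -
  have "Ck_on (Suc 0) T g"
    using assms(1) by (simp only: smooth_real_on_def)
  then show d: "(g has_real_derivative deriv g x) (at x)" if "x \<in> T" for x
    using that DERIV_imp_deriv by fastforce
  have "Ck_on k T (deriv g)" for k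
  proof -
    have "Ck_on (Suc k) T g"
      using assms(1) by (simp only: smooth_real_on_def)
    then obtain g' where g': "\<forall>x\<in>T. (g has_real_derivative g' x) (at x)" "Ck_on k T g'"
      by auto
    show ?thesis
      by (rule Ck_on_transform[OF assms(2) g'(2)]) (use g' DERIV_imp_deriv in fastforce)
  qed
  then show "smooth_real_on T (deriv g)"
    by (simp add: smooth_real_on_def)
qed

lemma open_extend_atLeastLessThan:
  fixes a b :: real
  assumes "open T" "a < b" "{a..<b} \<subseteq> T"
  obtains a' where "a' < a" "{a'..<b} \<subseteq> T"
proof -
  have "a \<in> T"
    using assms(2,3) by auto
  then obtain e where e: "e > 0" "ball a e \<subseteq> T"
    using assms(1) open_contains_ball by blast
  have "{a - e / 2..<b} \<subseteq> T"
  proof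
    fix x assume x: "x \<in> {a - e / 2..<b}"
    show "x \<in> T"
    proof (cases "x < a")
      case True
      with x e(1) have "x \<in> ball a e"
        by (simp add: dist_real_def)
      with e show ?thesis by blast
    qed (use x assms(3) in auto)
  qed
  with e(1) show ?thesis
    using that[of "a - e / 2"] by simp
qed

lemma integral_has_real_derivative_interior:
  assumes "continuous_on {a..<b} g" "x \<in> {a<..<b}"
  shows "((\<lambda>x. integral {a..x} g) has_real_derivative g x) (at x)"
proof -
  define b' where "b' = (x + b) / 2"
  have "continuous_on {a..b'} g"
    using assms(1) by (rule continuous_on_subset) (use assms(2) in \<open>auto simp: b'_def\<close>)
  from integral_has_real_derivative[OF this, of x]
  have "((\<lambda>x. integral {a..x} g) has_real_derivative g x) (at x within {a..b'})"
    using assms(2) by (simp add: b'_def)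
  moreover have "at x within {a..b'} = at x"
    using assms(2) by (intro at_within_interior) (auto simp: b'_def)
  ultimately show ?thesis
    by simp
qed

lemma smooth_real_on_antiderivative:
  fixes a b :: real
  assumes "open T" "a < b" "{a..<b} \<subseteq> T" "smooth_real_on T g"
  obtains D G where "open D" "{a..<b} \<subseteq> D" "smooth_real_on D G"
    "\<And>x. x \<in> D \<Longrightarrow> (G has_real_derivative g x) (at x)"
proof -
  obtain a' where "a' < a" and DT: "{a'..<b} \<subseteq> T"
    using open_extend_atLeastLessThan[OF assms(1-3)] .
  define D where "D = {a'<..<b}"
  have cont: "continuous_on {a'..<b} g"
    using assms(4) DT Ck_on_imp_continuous_on continuous_on_subset
    unfolding smooth_real_on_def by blast
  have G': "((\<lambda>x. integral {a'..x} g) has_real_derivative g x) (at x)" if "x \<in> D" for x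
    by (rule integral_has_real_derivative_interior[OF cont]) (use that in \<open>simp add: D_def\<close>)
  have "smooth_real_on D (\<lambda>x. integral {a'..x} g)"
    unfolding smooth_real_on_def
  proof
    fix k
    show "Ck_on k D (\<lambda>x. integral {a'..x} g)"
    proof (cases k)
      case (Suc j)
      have "D \<subseteq> T"
        using DT by (auto simp: D_def)
      moreover have "Ck_on j T g"
        using assms(4) by (simp add: smooth_real_on_def)
      ultimately have "Ck_on j D g"
        by (rule Ck_on_subset)
      with Suc G' show ?thesis by auto
    qed simp
  qed
  moreover have "open D" "{a..<b} \<subseteq> D"
    using \<open>a' < a\<close> by (auto simp: D_def)
  ultimately show ?thesis
    using that[of D "\<lambda>x. integral {a'..x} g"] G' by blast
qed

section \<open>The radial profile of \<open>f_c\<close>\<close>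

lemma one_minus_mult_pos: "q \<in> {-1<..<1} \<Longrightarrow> t \<in> {0..1} \<Longrightarrow> 0 < 1 - t * (q::real)"
proof -
  assume "q \<in> {-1<..<1}" "t \<in> {0..1}"
  then have "\<bar>q\<bar> * t \<le> \<bar>q\<bar>" "\<bar>q\<bar> < 1"
    using mult_left_le[of t "\<bar>q\<bar>"] by auto
  then have "\<bar>t * q\<bar> < 1"
    using \<open>t \<in> {0..1}\<close> by (simp add: abs_mult mult.commute)
  then show ?thesis by linarith
qed

lemma has_real_derivative_divide_power:
  assumes "b - c * x \<noteq> (0::real)"
  shows "((\<lambda>x. a / (b - c * x) ^ n) has_real_derivative real n * c * a / (b - c * x) ^ Suc n)
    (at x within S)"
proof (cases n)
  case (Suc k)
  have "(b - c * x) ^ k \<noteq> 0" using assms by simp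
  with assms Suc show ?thesis
    by (auto intro!: derivative_eq_intros simp: field_simps simp del: power_Suc)
      (simp add: algebra_simps)
qed (auto intro!: derivative_eq_intros)

lemma sqrt_power_has_real_derivative:
  assumes "0 < t" "2 \<le> m"
  shows "((\<lambda>t. sqrt t ^ m) has_real_derivative real m / 2 * sqrt t ^ (m - 2)) (at t)"
proof -
  obtain n where m: "m = Suc (Suc n)"
    using assms(2) by (metis add_2_eq_Suc le_Suc_ex)
  have "sqrt t ^ Suc n * inverse (sqrt t) = sqrt t ^ n"
    using assms(1) by simp
  with assms(1) show ?thesis
    unfolding m by (auto intro!: derivative_eq_intros simp del: power_Suc simp: field_simps)
qed

text \<open>Arises from \<open>\<integral>\<^sub>0\<^sup>s sinh^(m-1)\<close> through the substitutions \<open>u = tanh(t/2)\<close> and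
  \<open>u^2 = tanh^2(s/2) t\<close>; the factor \<open>t^k\<close> records derivatives in \<open>q\<close>.\<close>

definition J_int :: "nat \<Rightarrow> nat \<Rightarrow> real \<Rightarrow> real" where
  "J_int m k q = integral {0..1} (\<lambda>t. sqrt t ^ (m - 2) * t ^ k / (1 - t * q) ^ (m + k))"

lemma J_int_has_derivative:
  assumes q: "q \<in> {-1<..<1}"
  shows "(J_int m k has_real_derivative real (m + k) * J_int m (Suc k) q) (at q)"
proof -
  let ?f = "\<lambda>x t. sqrt t ^ (m - 2) * t ^ k / (1 - t * x) ^ (m + k)"
  let ?fx = "\<lambda>x t. real (m + k) * (sqrt t ^ (m - 2) * t ^ Suc k / (1 - t * x) ^ (m + Suc k))"
  have "((\<lambda>x. ?f x t) has_real_derivative ?fx x t) (at x within {-1<..<1})"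
    if "x \<in> {-1<..<1}" "t \<in> cbox 0 1" for x t
  proof -
    have "1 - t * x \<noteq> 0"
      using one_minus_mult_pos[of x t] that by (simp add: cbox_interval)
    from has_real_derivative_divide_power[OF this,
        where a = "sqrt t ^ (m - 2) * t ^ k" and n = "m + k" and S = "{-1<..<1}"]
    show ?thesis
      by (simp add: mult.assoc mult.left_commute)
  qed
  moreover have "?f x integrable_on cbox 0 1" if "x \<in> {-1<..<1}" for x
  proof -
    have "\<forall>t\<in>{0..1}. 1 - t * x \<noteq> 0"
      using one_minus_mult_pos[OF that] by force
    then show ?thesis
      by (intro integrable_continuous continuous_intros) (auto simp: cbox_interval)
  qed
  moreover have "continuous_on ({-1<..<1} \<times> cbox 0 1) (\<lambda>(x, t). ?fx x t)"
  proof -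
    have "t * x \<noteq> 1" if "x \<in> {-1<..<1}" "t \<in> {0..1}" for x t :: real
      using one_minus_mult_pos[OF that] by simp
    then show ?thesis
      by (auto simp: cbox_interval split_beta intro!: continuous_intros)
  qed
  ultimately have "((\<lambda>x. integral (cbox 0 1) (?f x)) has_real_derivative integral (cbox 0 1) (?fx q))
      (at q within {-1<..<1})"
    using q by (intro leibniz_rule_field_derivative) auto
  moreover have "at q within {-1<..<1} = at q"
    using q by (intro at_within_open) auto
  moreover have "integral (cbox 0 1) (?fx q) = real (m + k) * J_int m (Suc k) q"
    unfolding J_int_def cbox_interval by (rule integral_mult_right)
  moreover have "J_int m k = (\<lambda>x. integral {0..1} (?f x))"
    by (rule ext) (simp only: J_int_def)
  ultimately show ?thesis
    by (simp only: cbox_interval)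
qed

lemma Ck_on_J_int: "Ck_on n {-1<..<1} (J_int m k)"
proof (induction n arbitrary: k)
  case (Suc n)
  show ?case
  proof (simp only: Ck_on.simps, intro exI conjI)
    show "\<forall>q\<in>{-1<..<1}. (J_int m k has_real_derivative real (m + k) * J_int m (Suc k) q) (at q)"
      using J_int_has_derivative by blast
    show "Ck_on n {-1<..<1} (\<lambda>q. real (m + k) * J_int m (Suc k) q)"
      using Suc.IH by (rule Ck_on_cmult)
  qed
qed simp

lemma J_int_integration_by_parts:
  assumes m: "m \<ge> 2" and q: "q \<in> {-1<..<1}"
  shows "real m / 2 * J_int m 0 q + q * (real m * J_int m 1 q) = 1 / (1 - q) ^ m"
proof -
  let ?a = "\<lambda>t. sqrt t ^ (m - 2) / (1 - t * q) ^ m"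
  let ?b = "\<lambda>t. sqrt t ^ (m - 2) * t / (1 - t * q) ^ (m + 1)"
  have pos: "t * q \<noteq> 1" if "t \<in> {0..1}" for t
    using one_minus_mult_pos[OF q that] by simp
  have "((\<lambda>t. real m / 2 * ?a t + q * (real m * ?b t)) has_integral
      sqrt 1 ^ m * (1 / (1 - 1 * q) ^ m) - sqrt 0 ^ m * (1 / (1 - 0 * q) ^ m)) {0..1}"
  proof (rule fundamental_theorem_of_calculus_interior)
    show "continuous_on {0..1} (\<lambda>t. sqrt t ^ m * (1 / (1 - t * q) ^ m))"
      using pos by (intro continuous_intros) auto
    fix t :: real assume t: "t \<in> {0<..<1}"
    then have "1 - q * t \<noteq> 0" using pos[of t] by (auto simp: mult.commute)
    from DERIV_mult[OF sqrt_power_has_real_derivative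
        has_real_derivative_divide_power[OF this, where a = 1 and n = m and S = UNIV]]
    have "((\<lambda>t. sqrt t ^ m * (1 / (1 - q * t) ^ m)) has_real_derivative
        real m / 2 * sqrt t ^ (m - 2) * (1 / (1 - q * t) ^ m)
        + real m * q * 1 / (1 - q * t) ^ Suc m * sqrt t ^ m) (at t)"
      using t m by simp
    moreover have "sqrt t ^ m = sqrt t ^ (m - 2 + 2)"
      using m by (simp only: le_add_diff_inverse2)
    then have "sqrt t ^ m = sqrt t ^ (m - 2) * t"
      using t by (simp only: power_add) simp
    ultimately show "((\<lambda>t. sqrt t ^ m * (1 / (1 - t * q) ^ m)) has_vector_derivative
        real m / 2 * ?a t + q * (real m * ?b t)) (at t)"
      by (simp add: has_real_derivative_iff_has_vector_derivative[symmetric] ac_simps)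
  qed simp
  moreover have "integral {0..1} (\<lambda>t. real m / 2 * ?a t + q * (real m * ?b t))
      = real m / 2 * integral {0..1} ?a + q * (real m * integral {0..1} ?b)"
  proof -
    have "(\<lambda>t. real m / 2 * ?a t) integrable_on {0..1}"
      "(\<lambda>t. q * (real m * ?b t)) integrable_on {0..1}"
      using pos by (auto intro!: integrable_continuous_real continuous_intros)
    then show ?thesis
      by (simp only: integral_add integral_mult_right)
  qed
  moreover have "J_int m 0 q = integral {0..1} ?a" "J_int m 1 q = integral {0..1} ?b"
    by (simp_all add: J_int_def)
  moreover have "(0::real) ^ m = 0"
    using m by simp
  ultimately show ?thesis
    by (simp add: integral_unique)
qed

definition B_fun :: "nat \<Rightarrow> real \<Rightarrow> real \<Rightarrow> real" where
  "B_fun m c q = c * (1 - q) ^ (m - 1) * J_int m 0 q"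

lemma B_fun_has_derivative:
  assumes "m \<ge> 2" "q \<in> {-1<..<1}"
  shows "(B_fun m c has_real_derivative
      c * ((1 - q) ^ (m - 1) * (real m * J_int m 1 q) - real (m - 1) * (1 - q) ^ (m - 2) * J_int m 0 q))
    (at q)"
proof -
  have "(J_int m 0 has_real_derivative real m * J_int m 1 q) (at q)"
    using J_int_has_derivative[OF assms(2), of m 0] by simp
  then show ?thesis
    unfolding B_fun_def[abs_def]
    by (auto intro!: derivative_eq_intros simp: algebra_simps numeral_2_eq_2)
qed

lemma Ck_on_B_fun: "Ck_on k {-1<..<1} (B_fun m c)"
  unfolding B_fun_def
  by (intro Ck_on_mult Ck_on_const Ck_on_power Ck_on_diff Ck_on_ident Ck_on_J_int)

text \<open>The equation \<open>(sinh^(m-1) A_c)' = c sinh^(m-1)\<close> for \<open>A_c(r) = tanh(r/2) B(tanh^2(r/2))\<close>,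
  written in the variable \<open>q = tanh^2(r/2)\<close>.\<close>

lemma B_fun_ode:
  assumes m: "m \<ge> 2" and q: "q \<in> {-1<..<1}"
    and B': "(B_fun m c has_real_derivative B') (at q)"
  shows "(1 - q) * (B_fun m c q / 2 + q * B') + real (m - 1) * (1 + q) * B_fun m c q / 2 = c"
proof -
  obtain n where n: "m = Suc (Suc n)"
    using m by (metis add_2_eq_Suc le_Suc_ex)
  define y where "y = 1 - q"
  define P where "P = y ^ n"
  have "y \<noteq> 0" "P \<noteq> 0"
    using q by (auto simp: y_def P_def)
  have pows: "(1 - q) ^ (m - 1) = y * P" "(1 - q) ^ (m - 2) = P" "(1 - q) ^ m = y * (y * P)"
    by (simp_all add: n y_def P_def)
  have B'_eq: "B' = c * ((1 - q) ^ (m - 1) * (real m * J_int m 1 q)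
      - real (m - 1) * (1 - q) ^ (m - 2) * J_int m 0 q)"
    using DERIV_unique[OF B' B_fun_has_derivative[OF m q]] .
  have I: "q * (real m * J_int m 1 q) = 1 / (y * (y * P)) - real m / 2 * J_int m 0 q"
    using J_int_integration_by_parts[OF m q] unfolding pows by linarith
  have "q * B' = c * (y * P) * (q * (real m * J_int m 1 q)) - c * real (m - 1) * q * P * J_int m 0 q"
    unfolding B'_eq pows by (simp add: algebra_simps)
  also have "\<dots> = c / y - c * (y * P) * (real m / 2 * J_int m 0 q)
      - c * real (m - 1) * q * P * J_int m 0 q"
    unfolding I using \<open>y \<noteq> 0\<close> \<open>P \<noteq> 0\<close> by (simp add: right_diff_distrib)
  finally have qB': "q * B' = c / y - c * (y * P) * (real m / 2 * J_int m 0 q)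
      - c * real (m - 1) * q * P * J_int m 0 q" .
  have B: "B_fun m c q = c * (y * P) * J_int m 0 q"
    unfolding B_fun_def pows ..
  have q_eq: "q = 1 - y"
    by (simp add: y_def)
  show ?thesis
    unfolding qB' B unfolding q_eq using \<open>y \<noteq> 0\<close> by (simp add: n field_simps)
qed

definition psi_fun :: "nat \<Rightarrow> real \<Rightarrow> real \<Rightarrow> real" where
  "psi_fun m c q = B_fun m c q / ((1 - q) * sqrt (1 + q * B_fun m c q ^ 2))"

text \<open>The profile \<open>\<phi>\<close> must be smooth on a neighbourhood of \<open>[0,1)\<close>, so \<open>psi_fun\<close> is also
  needed at small negative \<open>q\<close>, where \<open>1 + q B^2\<close> may vanish.\<close>

definition psi_dom :: "nat \<Rightarrow> real \<Rightarrow> real set" where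
  "psi_dom m c = {-1<..<1} \<inter> (\<lambda>q. 1 + q * B_fun m c q ^ 2) -` {0<..}"

lemma open_psi_dom: "open (psi_dom m c)"
proof -
  have "continuous_on {-1<..<1} (B_fun m c)"
    using Ck_on_imp_continuous_on Ck_on_B_fun by blast
  then have "continuous_on {-1<..<1} (\<lambda>q. 1 + q * B_fun m c q ^ 2)"
    by (intro continuous_intros)
  then show ?thesis
    unfolding psi_dom_def by (rule continuous_open_preimage) auto
qed

lemma atLeastLessThan_subset_psi_dom: "{0..<1} \<subseteq> psi_dom m c"
  by (auto simp: psi_dom_def add_pos_nonneg)

lemma smooth_real_on_psi_fun: "smooth_real_on (psi_dom m c) (psi_fun m c)"
  unfolding smooth_real_on_def
proof
  fix k
  have B: "Ck_on k (psi_dom m c) (B_fun m c)"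
    by (rule Ck_on_subset[OF _ Ck_on_B_fun]) (auto simp: psi_dom_def)
  have "Ck_on k (psi_dom m c) (\<lambda>q. sqrt (1 + q * B_fun m c q ^ 2))"
    using B by (intro Ck_on_sqrt_comp Ck_on_add Ck_on_mult Ck_on_const Ck_on_ident Ck_on_power)
      (auto simp: psi_dom_def)
  then show "Ck_on k (psi_dom m c) (psi_fun m c)"
    unfolding psi_fun_def[abs_def]
    by (intro Ck_on_divide[OF B] Ck_on_mult Ck_on_diff Ck_on_const Ck_on_ident)
      (auto simp: psi_dom_def)
qed

lemma tanh_sq_less_one: "tanh (x::real) ^ 2 < 1"
  using tanh_real_bounds[of x] by (simp add: abs_square_less_1 abs_less_iff)

lemma sinh_eq_tanh_half: "sinh (s::real) = 2 * tanh (s / 2) / (1 - tanh (s / 2) ^ 2)"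
proof -
  define u where "u = s / 2"
  have "cosh u \<noteq> 0"
    using cosh_real_pos[of u] by linarith
  have "1 - tanh u ^ 2 = (cosh u ^ 2 - sinh u ^ 2) / cosh u ^ 2"
    using \<open>cosh u \<noteq> 0\<close> by (simp add: tanh_def power_divide field_simps)
  also have "cosh u ^ 2 - sinh u ^ 2 = 1"
    using cosh_square_eq[of u] by simp
  finally have sech: "1 - tanh u ^ 2 = 1 / cosh u ^ 2" .
  have "sinh (2 * u) = 2 * tanh u / (1 - tanh u ^ 2)"
    unfolding sech sinh_double using \<open>cosh u \<noteq> 0\<close>
    by (simp add: tanh_def field_simps power2_eq_square)
  then show ?thesis
    by (simp add: u_def)
qed

lemma integral_sinh_power:
  assumes m: "m \<ge> 2" and s: "s \<ge> 0"
  shows "integral {0..s} (\<lambda>t. sinh t ^ (m - 1)) = 2 ^ (m - 1) * tanh (s / 2) ^ m * J_int m 0 (tanh (s / 2) ^ 2)"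
proof -
  let ?G = "\<lambda>s. 2 ^ (m - 1) * tanh (s / 2) ^ m * J_int m 0 (tanh (s / 2) ^ 2)"
  have "(?G has_real_derivative sinh t ^ (m - 1)) (at t)" for t
  proof -
    obtain k where k: "m = Suc k"
      using m by (cases m) auto
    define T where "T = tanh (t / 2)"
    have T: "T ^ 2 \<in> {-1<..<1}" "1 - T ^ 2 \<noteq> 0"
      using tanh_sq_less_one[of "t / 2"] by (auto simp: T_def intro: less_le_trans[of _ 0])
    have "(?G has_real_derivative 2 ^ (m - 1) * (real m * T ^ (m - 1) * ((1 - T ^ 2) / 2)
        * J_int m 0 (T ^ 2) + T ^ m * (real m * J_int m 1 (T ^ 2) * (2 * T * ((1 - T ^ 2) / 2))))) (at t)"
      using J_int_has_derivative[OF T(1), of m 0]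
      unfolding T_def
      by (auto intro!: derivative_eq_intros DERIV_chain2[of "J_int m 0"]) (simp add: algebra_simps)
    moreover have "2 ^ (m - 1) * (real m * T ^ (m - 1) * ((1 - T ^ 2) / 2) * J_int m 0 (T ^ 2)
        + T ^ m * (real m * J_int m 1 (T ^ 2) * (2 * T * ((1 - T ^ 2) / 2))))
      = 2 ^ k * T ^ k * (1 - T ^ 2)
        * (real m / 2 * J_int m 0 (T ^ 2) + T ^ 2 * (real m * J_int m 1 (T ^ 2)))"
      by (simp add: k field_simps power2_eq_square)
    also have "\<dots> = 2 ^ k * T ^ k * (1 - T ^ 2) / ((1 - T ^ 2) * (1 - T ^ 2) ^ k)"
      unfolding J_int_integration_by_parts[OF m T(1)] by (simp add: k)
    also have "\<dots> = (2 * T / (1 - T ^ 2)) ^ (m - 1)"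
      using T(2) by (simp add: k power_divide power_mult_distrib)
    ultimately show ?thesis
      by (simp add: sinh_eq_tanh_half[of t] T_def)
  qed
  then have "((\<lambda>t. sinh t ^ (m - 1)) has_integral ?G s - ?G 0) {0..s}"
    using s by (intro fundamental_theorem_of_calculus)
      (auto simp: has_real_derivative_iff_has_vector_derivative[symmetric] intro: has_field_derivative_at_within)
  then show ?thesis
    using m by (simp add: integral_unique)
qed

lemma A_fun_eq_B_fun:
  assumes m: "m \<ge> 2" and s: "s \<ge> 0"
  shows "A_fun m c s = tanh (s / 2) * B_fun m c (tanh (s / 2) ^ 2)"
proof (cases "s = 0")
  case False
  obtain k where k: "m = Suc k"
    using m by (cases m) auto
  define T where "T = tanh (s / 2)"
  have "T > 0" "1 - T ^ 2 \<noteq> 0"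
    using False s tanh_sq_less_one[of "s / 2"] by (auto simp: T_def)
  have "A_fun m c s = c / (2 * T / (1 - T ^ 2)) ^ k * (2 ^ k * T ^ Suc k * J_int m 0 (T ^ 2))"
    unfolding A_fun_def integral_sinh_power[OF m s] sinh_eq_tanh_half[of s] by (simp add: k T_def)
  also have "\<dots> = T * (c * (1 - T ^ 2) ^ k * J_int m 0 (T ^ 2))"
    using \<open>T > 0\<close> \<open>1 - T ^ 2 \<noteq> 0\<close> by (simp add: power_divide power_mult_distrib field_simps)
  finally show ?thesis
    unfolding B_fun_def T_def k by simp
qed (simp add: A_fun_def)

lemma tanh_artanh_real: "\<bar>r\<bar> < 1 \<Longrightarrow> tanh (artanh r) = (r::real)"
proof -
  assume r: "\<bar>r\<bar> < 1"
  define y where "y = (1 + r) / (1 - r)"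
  have y: "y > 0"
    using r unfolding y_def by (intro divide_pos_pos) auto
  have "exp (- 2 * (ln y / 2)) = 1 / y"
    using y by (simp add: exp_minus exp_ln inverse_eq_divide)
  then have "tanh (ln y / 2) = (1 - 1 / y) / (1 + 1 / y)"
    by (simp add: tanh_real_altdef)
  also have "\<dots> = r"
    using r y by (simp add: y_def field_simps)
  finally show ?thesis
    by (simp add: artanh_def y_def)
qed

lemma tanh_half_hyp_dist0: "x \<in> ball_model \<Longrightarrow> tanh (hyp_dist0 x / 2) = norm x"
  using tanh_artanh_real[of "norm x"] by (simp add: ball_model_def hyp_dist0_def artanh_def)

lemma f_fun_eq_radial:
  fixes x :: "real^'m"
  assumes m: "CARD('m) \<ge> 2" and x: "x \<in> ball_model"
    and \<phi>: "\<And>q. q \<in> {0..<1} \<Longrightarrow> (\<phi> has_real_derivative psi_fun CARD('m) c q) (at q)"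
  shows "f_fun c x = \<phi> (norm x ^ 2) - \<phi> 0"
proof -
  let ?m = "CARD('m)" and ?A = "A_fun CARD('m) c"
  define r where "r = hyp_dist0 x"
  have "r \<ge> 0"
    using x by (simp add: r_def hyp_dist0_def ball_model_def)
  have "((\<lambda>s. \<phi> (tanh (s / 2) ^ 2)) has_real_derivative ?A s / sqrt (1 + ?A s ^ 2)) (at s)"
    if "s \<ge> 0" for s
  proof -
    define T where "T = tanh (s / 2)"
    define B where "B = B_fun ?m c (T ^ 2)"
    have "T ^ 2 \<in> {0..<1}" "1 - T ^ 2 \<noteq> 0"
      using tanh_sq_less_one[of "s / 2"] by (auto simp: T_def)
    have "((\<lambda>s. tanh (s / 2) ^ 2) has_real_derivative T * (1 - T ^ 2)) (at s)"
      unfolding T_def by (auto intro!: derivative_eq_intros)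
    from DERIV_chain2[OF \<phi>[OF \<open>T ^ 2 \<in> {0..<1}\<close>[unfolded T_def]] this]
    have "((\<lambda>s. \<phi> (tanh (s / 2) ^ 2)) has_real_derivative psi_fun ?m c (T ^ 2) * (T * (1 - T ^ 2))) (at s)"
      by (simp add: T_def)
    moreover have "psi_fun ?m c (T ^ 2) * (T * (1 - T ^ 2)) = T * B / sqrt (1 + (T * B) ^ 2)"
    proof -
      have "0 < sqrt (1 + T ^ 2 * B ^ 2)"
        by (simp add: add_pos_nonneg)
      with \<open>1 - T ^ 2 \<noteq> 0\<close> show ?thesis
        by (simp add: psi_fun_def B_def power_mult_distrib field_simps)
    qed
    moreover have "?A s = T * B"
      unfolding A_fun_eq_B_fun[OF m that] T_def B_def ..
    ultimately show ?thesis
      by simp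
  qed
  then have "((\<lambda>s. ?A s / sqrt (1 + ?A s ^ 2)) has_integral
      \<phi> (tanh (r / 2) ^ 2) - \<phi> (tanh (0 / 2) ^ 2)) {0..r}"
    using \<open>r \<ge> 0\<close> by (intro fundamental_theorem_of_calculus)
      (auto simp: has_real_derivative_iff_has_vector_derivative[symmetric] intro: has_field_derivative_at_within)
  then show ?thesis
    unfolding f_fun_def r_def[symmetric] tanh_half_hyp_dist0[OF x, folded r_def]
    by (simp add: integral_unique)
qed

lemma f_fun_radial_profile:
  assumes m: "CARD('m) \<ge> 2"
  obtains D \<phi> where "open D" "{0..<1} \<subseteq> D" "smooth_real_on D \<phi>"
    "\<And>q. q \<in> D \<Longrightarrow> (\<phi> has_real_derivative psi_fun CARD('m) c q) (at q)"
    "\<And>x::real^'m. x \<in> ball_model \<Longrightarrow> f_fun c x = \<phi> (x \<bullet> x)"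
proof -
  obtain D G where D: "open D" "{0..<1} \<subseteq> D" "smooth_real_on D G"
    and G: "\<And>q. q \<in> D \<Longrightarrow> (G has_real_derivative psi_fun CARD('m) c q) (at q)"
    using smooth_real_on_antiderivative[OF open_psi_dom zero_less_one atLeastLessThan_subset_psi_dom
        smooth_real_on_psi_fun, of "CARD('m)" c]
    by blast
  show ?thesis
  proof (rule that[of D "\<lambda>q. G q - G 0"])
    show "smooth_real_on D (\<lambda>q. G q - G 0)"
      using D(3) by (auto simp: smooth_real_on_def intro: Ck_on_diff Ck_on_const)
    show "((\<lambda>q. G q - G 0) has_real_derivative psi_fun CARD('m) c q) (at q)" if "q \<in> D" for q
      using G[OF that] by (auto intro!: derivative_eq_intros)
    show "f_fun c x = G (x \<bullet> x) - G 0" if "x \<in> ball_model" for x :: "real^'m"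
    proof -
      have "(G has_real_derivative psi_fun CARD('m) c q) (at q)" if "q \<in> {0..<1}" for q
        using G D(2) that by blast
      from f_fun_eq_radial[OF m \<open>x \<in> ball_model\<close> this] show ?thesis
        by (simp add: power2_norm_eq_inner)
    qed
  qed (use D in auto)
qed

section \<open>Smoothness on the unit ball\<close>

lemma has_derivative_radial:
  assumes "(g has_real_derivative g') (at (x \<bullet> x))"
  shows "((\<lambda>y. g (y \<bullet> y)) has_derivative (\<lambda>v. 2 * g' * (x \<bullet> v))) (at x)"
proof -
  have "((\<lambda>y. y \<bullet> y) has_derivative (\<lambda>v. x \<bullet> v + v \<bullet> x)) (at x)"
    by (auto intro!: derivative_eq_intros)
  from has_derivative_compose[OF this assms[unfolded has_field_derivative_def]]
  show ?thesis
    by (simp add: inner_commute algebra_simps)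
qed

lemma inner_self_less_one: "x \<in> ball (0::real^'m) 1 \<Longrightarrow> x \<bullet> x < 1"
  by (simp add: power2_norm_eq_inner[symmetric] abs_square_less_1)

text \<open>The coordinates are generators because the derivative of \<open>g(|x|^2)\<close> in direction \<open>v\<close>
  is \<open>2 g'(|x|^2) (x \<bullet> v)\<close>.\<close>

inductive_set radial_algebra :: "(real^'m \<Rightarrow> real) set" where
  const: "(\<lambda>x. a) \<in> radial_algebra"
| coord: "(\<lambda>x. x $ i) \<in> radial_algebra"
| radial: "smooth_real_on D g \<Longrightarrow> open D \<Longrightarrow> {0..<1} \<subseteq> D \<Longrightarrow> (\<lambda>x. g (x \<bullet> x)) \<in> radial_algebra"
| add: "f \<in> radial_algebra \<Longrightarrow> g \<in> radial_algebra \<Longrightarrow> (\<lambda>x. f x + g x) \<in> radial_algebra"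
| mult: "f \<in> radial_algebra \<Longrightarrow> g \<in> radial_algebra \<Longrightarrow> (\<lambda>x. f x * g x) \<in> radial_algebra"

lemma radial_algebra_sum:
  "finite I \<Longrightarrow> (\<And>i. i \<in> I \<Longrightarrow> f i \<in> radial_algebra) \<Longrightarrow> (\<lambda>x. \<Sum>i\<in>I. f i x) \<in> radial_algebra"
proof (induction I rule: finite_induct)
  case empty
  then show ?case using radial_algebra.const[of 0] by simp
next
  case (insert j I)
  then have "(\<lambda>x. f j x + (\<Sum>i\<in>I. f i x)) \<in> radial_algebra"
    by (intro radial_algebra.add) auto
  with insert show ?case by simp
qed

lemma radial_algebra_inner: "(\<lambda>x::real^'m. x \<bullet> v) \<in> radial_algebra"
proof -
  have "(\<lambda>x::real^'m. \<Sum>i\<in>UNIV. x $ i * v $ i) \<in> radial_algebra"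
    by (intro radial_algebra_sum radial_algebra.mult radial_algebra.coord radial_algebra.const) auto
  then show ?thesis
    by (simp add: inner_vec_def)
qed

lemma radial_algebra_has_derivative:
  "h \<in> radial_algebra \<Longrightarrow> \<exists>H. (\<forall>x\<in>ball (0::real^'m) 1. (h has_derivative H x) (at x))
     \<and> (\<forall>v. (\<lambda>x. H x v) \<in> radial_algebra)"
proof (induction rule: radial_algebra.induct)
  case (const a)
  show ?case
    by (rule exI[of _ "\<lambda>x v. 0"]) (auto intro: radial_algebra.const)
next
  case (coord i)
  have "((\<lambda>x::real^'m. x $ i) has_derivative (\<lambda>v. v $ i)) (at x)" for x
    by (rule bounded_linear_imp_has_derivative) (rule bounded_linear_vec_nth)
  then show ?case
    by (intro exI[of _ "\<lambda>x v. v $ i"]) (auto intro: radial_algebra.const)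
next
  case (radial D g)
  let ?H = "\<lambda>(x::real^'m) v. 2 * deriv g (x \<bullet> x) * (x \<bullet> v)"
  have "((\<lambda>x. g (x \<bullet> x)) has_derivative ?H x) (at x)" if "x \<in> ball (0::real^'m) 1" for x
  proof -
    have "x \<bullet> x \<in> D"
      using inner_self_less_one[OF that] radial(3) by auto
    then show ?thesis
      using has_derivative_radial smooth_real_on_deriv(2)[OF radial(1,2)] by blast
  qed
  moreover have "(\<lambda>x. ?H x v) \<in> radial_algebra" for v :: "real^'m"
    using smooth_real_on_deriv(1)[OF radial(1,2)] radial(2,3)
    by (auto intro!: radial_algebra.mult radial_algebra.const radial_algebra_inner radial_algebra.radial)
  ultimately show ?case
    by (intro exI[of _ ?H]) auto
next
  case (add f g)
  then obtain F G where F: "\<forall>x\<in>ball 0 1. (f has_derivative F x) (at x)" "\<forall>v. (\<lambda>x. F x v) \<in> radial_algebra"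
    and G: "\<forall>x\<in>ball 0 1. (g has_derivative G x) (at x)" "\<forall>v. (\<lambda>x. G x v) \<in> radial_algebra"
    by blast
  show ?case
    by (rule exI[of _ "\<lambda>x v. F x v + G x v"])
      (use F G in \<open>auto intro!: derivative_eq_intros radial_algebra.add\<close>)
next
  case (mult f g)
  then obtain F G where F: "\<forall>x\<in>ball 0 1. (f has_derivative F x) (at x)" "\<forall>v. (\<lambda>x. F x v) \<in> radial_algebra"
    and G: "\<forall>x\<in>ball 0 1. (g has_derivative G x) (at x)" "\<forall>v. (\<lambda>x. G x v) \<in> radial_algebra"
    by blast
  show ?case
    by (rule exI[of _ "\<lambda>x v. f x * G x v + F x v * g x"])
      (use F G mult in \<open>auto intro!: derivative_eq_intros radial_algebra.add radial_algebra.mult\<close>)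
qed

lemma ddir_radial_algebra:
  fixes f :: "real^'m \<Rightarrow> real"
  assumes "h \<in> radial_algebra" "\<And>x. x \<in> ball 0 1 \<Longrightarrow> f x = h x"
  shows "\<exists>k\<in>radial_algebra. \<forall>x\<in>ball 0 1. ddir f vs x = k x"
proof (induction vs)
  case Nil
  show ?case
    using assms by (intro bexI[of _ h]) auto
next
  case (Cons v vs)
  then obtain k where k: "k \<in> radial_algebra" "\<forall>x\<in>ball 0 1. ddir f vs x = k x"
    by blast
  obtain H where H: "\<forall>x\<in>ball (0::real^'m) 1. (k has_derivative H x) (at x)"
    "\<forall>v. (\<lambda>x. H x v) \<in> radial_algebra"
    using radial_algebra_has_derivative[OF k(1)] by blast
  have "\<forall>x\<in>ball 0 1. ddir f (v # vs) x = H x v"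
  proof
    fix x :: "real^'m" assume x: "x \<in> ball 0 1"
    have "(ddir f vs has_derivative H x) (at x)"
      by (rule has_derivative_transform_within_open[OF _ open_ball x]) (use H k x in auto)
    then show "ddir f (v # vs) x = H x v"
      by (simp add: frechet_derivative_at[symmetric])
  qed
  then show ?case
    using H(2) by (intro bexI[of _ "\<lambda>x. H x v"]) auto
qed

lemma smooth_on_radial:
  fixes f :: "real^'m \<Rightarrow> real"
  assumes "smooth_real_on D \<phi>" "open D" "{0..<1} \<subseteq> D" "\<And>x. x \<in> ball 0 1 \<Longrightarrow> f x = \<phi> (x \<bullet> x)"
  shows "smooth_on (ball 0 1) f"
  unfolding smooth_on_def differentiable_on_def
proof (intro allI ballI)
  fix vs and x :: "real^'m"
  assume x: "x \<in> ball 0 1"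
  have "(\<lambda>x. \<phi> (x \<bullet> x)) \<in> radial_algebra"
    using assms(1-3) by (rule radial_algebra.radial)
  from ddir_radial_algebra[OF this assms(4)]
  obtain k where k: "k \<in> radial_algebra" "\<forall>x\<in>ball 0 1. ddir f vs x = k x"
    by blast
  obtain H where H: "\<forall>x\<in>ball (0::real^'m) 1. (k has_derivative H x) (at x)"
    using radial_algebra_has_derivative[OF k(1)] by blast
  have "(ddir f vs has_derivative H x) (at x)"
    by (rule has_derivative_transform_within_open[OF _ open_ball x]) (use H k x in auto)
  then show "ddir f vs differentiable at x within ball 0 1"
    unfolding differentiable_def using has_derivative_at_withinI by blast
qed

section \<open>Graphs of radial functions over the Poincare ball\<close>

text \<open>\<open>a I + b x x^T\<close>: the induced metric and the second fundamental form of a radial graph have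
  this shape.\<close>

definition diag_outer :: "real^'n \<Rightarrow> real \<Rightarrow> real \<Rightarrow> real^'n^'n" where
  "diag_outer x a b = (\<chi> i j. a * (if i = j then 1 else 0) + b * (x $ i * x $ j))"

lemma sum_delta_mult:
  fixes g :: "'n::finite \<Rightarrow> real"
  shows "(\<Sum>k\<in>UNIV. (if i = k then 1 else 0) * g k) = g i"
    "(\<Sum>k\<in>UNIV. g k * (if k = j then 1 else 0)) = g j"
  by (simp_all add: if_distrib[of "\<lambda>u. u * _"] if_distrib[of "\<lambda>u. _ * u"] cong: if_cong)

lemma sum_nth_square: "(\<Sum>k\<in>UNIV. x $ k * x $ k) = x \<bullet> (x :: real^'n)"
  by (simp add: inner_vec_def)

lemma diag_outer_mult:
  "diag_outer x a1 b1 ** diag_outer x a2 b2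
     = diag_outer x (a1 * a2) (a1 * b2 + b1 * a2 + b1 * b2 * (x \<bullet> x))"
proof -
  have "(\<Sum>k\<in>UNIV. (a1 * (if i = k then 1 else 0) + b1 * (x $ i * x $ k))
        * (a2 * (if k = j then 1 else 0) + b2 * (x $ k * x $ j)))
      = a1 * (a2 * (if i = j then 1 else 0) + b2 * (x $ i * x $ j)) + b1 * x $ i * a2 * x $ j
        + b1 * b2 * x $ i * x $ j * (x \<bullet> x)" for i j
  proof -
    have "(\<Sum>k\<in>UNIV. (a1 * (if i = k then 1 else 0) + b1 * (x $ i * x $ k))
        * (a2 * (if k = j then 1 else 0) + b2 * (x $ k * x $ j)))
      = (\<Sum>k\<in>UNIV. (if i = k then 1 else 0) * (a1 * (a2 * (if k = j then 1 else 0) + b2 * (x $ k * x $ j))))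
      + (\<Sum>k\<in>UNIV. (b1 * x $ i * a2) * (x $ k * (if k = j then 1 else 0)))
      + (\<Sum>k\<in>UNIV. (b1 * b2 * x $ i * x $ j) * (x $ k * x $ k))"
      by (simp add: sum.distrib[symmetric] algebra_simps)
    also have "\<dots> = a1 * (a2 * (if i = j then 1 else 0) + b2 * (x $ i * x $ j)) + b1 * x $ i * a2 * x $ j
        + b1 * b2 * x $ i * x $ j * (x \<bullet> x)"
      by (simp only: sum_delta_mult sum_distrib_left[symmetric] sum_nth_square)
    finally show ?thesis .
  qed
  then show ?thesis
    unfolding diag_outer_def matrix_matrix_mult_def by (simp add: vec_eq_iff algebra_simps)
qed

lemma matrix_inv_unique:
  fixes A B :: "real^'n^'n"
  assumes "A ** B = mat 1" "B ** A = mat 1"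
  shows "matrix_inv A = B"
  unfolding matrix_inv_def
proof (rule some_equality)
  fix C assume "A ** C = mat 1 \<and> C ** A = mat 1"
  have "C = C ** (A ** B)"
    using assms by simp
  also have "\<dots> = (C ** A) ** B"
    by (rule matrix_mul_assoc)
  finally show "C = B"
    using \<open>A ** C = mat 1 \<and> C ** A = mat 1\<close> by simp
qed (use assms in simp)

lemma matrix_inv_diag_outer:
  assumes "a \<noteq> 0" "a + b * (x \<bullet> x) \<noteq> 0"
  shows "matrix_inv (diag_outer x a b) = diag_outer x (1 / a) (- b / (a * (a + b * (x \<bullet> x))))"
proof (rule matrix_inv_unique)
  have "mat 1 = diag_outer x 1 0"
    by (simp add: diag_outer_def mat_def vec_eq_iff)
  moreover have "a * (- b / (a * (a + b * (x \<bullet> x)))) + b * (1 / a)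
      + b * (- b / (a * (a + b * (x \<bullet> x)))) * (x \<bullet> x) = 0"
  proof -
    have "a * (- b / (a * (a + b * (x \<bullet> x)))) + b * (- b / (a * (a + b * (x \<bullet> x)))) * (x \<bullet> x)
        = (- b / (a * (a + b * (x \<bullet> x)))) * (a + b * (x \<bullet> x))"
      by (simp add: algebra_simps add_divide_distrib)
    also have "\<dots> = - b / a"
      using assms by simp
    finally show ?thesis
      using assms(1) by simp
  qed
  ultimately show "diag_outer x a b ** diag_outer x (1 / a) (- b / (a * (a + b * (x \<bullet> x)))) = mat 1"
    "diag_outer x (1 / a) (- b / (a * (a + b * (x \<bullet> x)))) ** diag_outer x a b = mat 1"
    unfolding diag_outer_mult using assms(1) by (simp_all add: algebra_simps)
qed

lemma sum_diag_outer_mult: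
  fixes x :: "real^'n"
  shows "(\<Sum>i\<in>UNIV. \<Sum>j\<in>UNIV. diag_outer x a b $ i $ j * diag_outer x c d $ i $ j)
    = a * c * real CARD('n) + (a * d + b * c) * (x \<bullet> x) + b * d * (x \<bullet> x)\<^sup>2"
proof -
  have row: "(\<Sum>j\<in>UNIV. diag_outer x a b $ i $ j * diag_outer x c d $ i $ j)
     = a * c + (a * d + b * c) * (x $ i * x $ i) + b * d * (x $ i * x $ i) * (x \<bullet> x)" for i
  proof -
    have "(\<Sum>j\<in>UNIV. diag_outer x a b $ i $ j * diag_outer x c d $ i $ j)
      = (\<Sum>j\<in>UNIV. (if i = j then 1 else 0) * (a * c + a * d * (x $ i * x $ j) + b * c * (x $ i * x $ j)))
       + (\<Sum>j\<in>UNIV. (b * d * x $ i * x $ i) * (x $ j * x $ j))"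
      unfolding sum.distrib[symmetric]
      by (rule sum.cong) (auto simp: diag_outer_def algebra_simps)
    also have "\<dots> = a * c + (a * d + b * c) * (x $ i * x $ i) + b * d * (x $ i * x $ i) * (x \<bullet> x)"
      by (simp only: sum_delta_mult sum_distrib_left[symmetric] sum_nth_square) (simp add: algebra_simps)
    finally show ?thesis .
  qed
  show ?thesis
    unfolding row sum.distrib sum_distrib_left[symmetric] sum_distrib_right[symmetric] sum_nth_square
    by (simp add: power2_eq_square algebra_simps)
qed

lemma lor_metric_eq:
  "lor_metric p u v = 4 * (fst u \<bullet> fst v) / (1 - fst p \<bullet> fst p)\<^sup>2 - snd u * snd v"
  by (simp add: lor_metric_def hyp_metric_def power2_norm_eq_inner)

lemma lor_metric_scaleR_left: "lor_metric p (a *\<^sub>R u) v = a * lor_metric p u v"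
  unfolding lor_metric_eq by (simp add: algebra_simps)

lemma lor_metric_sum_left: "lor_metric p (\<Sum>i\<in>I. u i) v = (\<Sum>i\<in>I. lor_metric p (u i) v)"
proof (induction I rule: infinite_finite_induct)
  case (insert i I)
  then show ?case
    by (simp add: lor_metric_eq inner_add_left add_divide_distrib algebra_simps)
qed (simp_all add: lor_metric_eq)

lemma lor_metric_nondegenerate:
  assumes "fst p \<bullet> fst p \<noteq> 1" "\<And>w. lor_metric p z w = lor_metric p z' w"
  shows "z = z'"
proof -
  define a where "a = fst z - fst z'"
  define b where "b = snd z - snd z'"
  have "4 * (a \<bullet> fst w) / (1 - fst p \<bullet> fst p)\<^sup>2 - b * snd w = 0" for w
    using assms(2)[of w] unfolding lor_metric_eq a_def b_def
    by (simp add: inner_diff_left diff_divide_distrib algebra_simps)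
  from this[of "(a, - b)"] have "4 * (a \<bullet> a) / (1 - fst p \<bullet> fst p)\<^sup>2 + b * b = 0"
    by simp
  moreover have "0 \<le> 4 * (a \<bullet> a) / (1 - fst p \<bullet> fst p)\<^sup>2" "0 \<le> b * b"
    by simp_all
  ultimately have "a \<bullet> a = 0" "b = 0"
    using assms(1) by (auto simp: add_nonneg_eq_0_iff)
  then show ?thesis
    by (simp add: a_def b_def prod_eq_iff)
qed

lemma lor_metric_has_derivative:
  assumes "fst p \<bullet> fst p \<noteq> 1"
  shows "((\<lambda>q. lor_metric q V W) has_derivative
     (\<lambda>U. 16 * (fst V \<bullet> fst W) * (fst p \<bullet> fst U) / (1 - fst p \<bullet> fst p) ^ 3)) (at p)"
proof -
  let ?s = "fst p \<bullet> fst p" and ?k = "fst V \<bullet> fst W"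
  have "1 - ?s \<noteq> 0"
    using assms by simp
  have "((\<lambda>t. 4 * ?k / (1 - t)\<^sup>2 - snd V * snd W) has_real_derivative
      - (4 * ?k * (- (2 * (1 - ?s)))) / ((1 - ?s)\<^sup>2)\<^sup>2) (at ?s)"
    using assms by (auto intro!: derivative_eq_intros)
  moreover have "- (4 * ?k * (- (2 * y))) / (y\<^sup>2)\<^sup>2 = 8 * ?k / y ^ 3" if "y \<noteq> 0" for y :: real
    using that by (simp add: field_simps power2_eq_square power3_eq_cube)
  ultimately have h: "((\<lambda>t. 4 * ?k / (1 - t)\<^sup>2 - snd V * snd W) has_real_derivative
      8 * ?k / (1 - ?s) ^ 3) (at ?s)"
    using \<open>1 - ?s \<noteq> 0\<close> by metis
  have g: "((\<lambda>q. fst q \<bullet> fst q) has_derivative (\<lambda>U. fst p \<bullet> fst U + fst U \<bullet> fst p)) (at p)"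
    by (auto intro!: derivative_eq_intros)
  from has_derivative_compose[OF g h[unfolded has_field_derivative_def]]
  show ?thesis
    unfolding lor_metric_eq by (simp add: inner_commute field_simps)
qed

lemma christoffel_lor_metric:
  fixes p U V :: "(real^'m) \<times> real"
  assumes "fst p \<bullet> fst p < 1"
  shows "christoffel lor_metric p U V = ((2 / (1 - fst p \<bullet> fst p)) *\<^sub>R
      ((fst p \<bullet> fst U) *\<^sub>R fst V + (fst p \<bullet> fst V) *\<^sub>R fst U - (fst U \<bullet> fst V) *\<^sub>R fst p), 0)"
    (is "_ = ?z")
proof -
  let ?s = "fst p \<bullet> fst p"
  have ne: "?s \<noteq> 1"
    using assms by simp
  let ?R = "\<lambda>w. (frechet_derivative (\<lambda>q. lor_metric q V w) (at p) U
     + frechet_derivative (\<lambda>q. lor_metric q U w) (at p) V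
     - frechet_derivative (\<lambda>q. lor_metric q U V) (at p) w) / 2"
  have z: "lor_metric p ?z w = ?R w" for w
  proof -
    have alg: "4 * ((2 / y) * (a + b - c)) / y\<^sup>2 = (16 * a / y ^ 3 + 16 * b / y ^ 3 - 16 * c / y ^ 3) / 2"
      if "y \<noteq> 0" for y a b c :: real
      using that by (simp add: field_simps power2_eq_square power3_eq_cube)
    have "lor_metric p ?z w = 4 * ((2 / (1 - ?s)) * ((fst p \<bullet> fst U) * (fst V \<bullet> fst w)
        + (fst p \<bullet> fst V) * (fst U \<bullet> fst w) - (fst U \<bullet> fst V) * (fst p \<bullet> fst w))) / (1 - ?s)\<^sup>2"
      unfolding lor_metric_eq by (simp add: inner_add_left inner_diff_left)
    also have "\<dots> = ?R w"
      unfolding frechet_derivative_at[OF lor_metric_has_derivative[OF ne], symmetric]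
      using ne by (subst alg) (simp_all add: ac_simps)
    finally show ?thesis .
  qed
  show ?thesis
    unfolding christoffel_def
  proof (rule the_equality)
    show "\<And>z'. \<forall>w. lor_metric p z' w = ?R w \<Longrightarrow> z' = ?z"
      using lor_metric_nondegenerate[OF ne] z by metis
  qed (use z in auto)
qed

lemma axis_component: "axis i a $ j = (if j = i then a else 0)"
  by (simp add: axis_def)

text \<open>For \<open>f x = \<phi>(x \<bullet> x)\<close> with \<open>\<phi>' = P\<close>, \<open>radial_grad_sq P (x \<bullet> x)\<close> is \<open>|\<nabla>f|^2\<close> in the
  metric \<open>g\<close>, and \<open>radial_tilt P (x \<bullet> x) = sqrt(1 - |\<nabla>f|^2)\<close>.\<close>

definition radial_grad_sq :: "(real \<Rightarrow> real) \<Rightarrow> real \<Rightarrow> real" where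
  "radial_grad_sq P s = (1 - s)\<^sup>2 * (P s)\<^sup>2 * s"

definition radial_tilt :: "(real \<Rightarrow> real) \<Rightarrow> real \<Rightarrow> real" where
  "radial_tilt P s = sqrt (1 - radial_grad_sq P s)"

locale radial_graph =
  fixes f :: "real^'m \<Rightarrow> real" and \<phi> P :: "real \<Rightarrow> real"
  assumes f_eq: "\<And>x. x \<in> ball 0 1 \<Longrightarrow> f x = \<phi> (x \<bullet> x)"
    and has_derivative_\<phi>: "\<And>s. s \<in> {0..<1} \<Longrightarrow> (\<phi> has_real_derivative P s) (at s)"
begin

lemma has_derivative_f:
  assumes x: "x \<in> ball 0 1"
  shows "(f has_derivative (\<lambda>v. 2 * P (x \<bullet> x) * (x \<bullet> v))) (at x)"
proof -
  have "x \<bullet> x \<in> {0..<1}"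
    using inner_self_less_one[OF x] by simp
  from has_derivative_radial[OF has_derivative_\<phi>[OF this]]
  show ?thesis
    by (rule has_derivative_transform_within_open[OF _ open_ball x]) (use f_eq in auto)
qed

lemma frechet_derivative_graph_map:
  assumes "x \<in> ball 0 1"
  shows "frechet_derivative (graph_map f) (at x) = (\<lambda>v. (v, 2 * P (x \<bullet> x) * (x \<bullet> v)))"
proof -
  have "graph_map f = (\<lambda>y. (y, f y))"
    by (simp add: graph_map_def fun_eq_iff)
  then have "(graph_map f has_derivative (\<lambda>v. (v, 2 * P (x \<bullet> x) * (x \<bullet> v)))) (at x)"
    using has_derivative_Pair[OF has_derivative_ident has_derivative_f[OF assms]] by simp
  then show ?thesis
    by (rule frechet_derivative_at[symmetric])
qed

lemma frechet_derivative_graph_map_direction: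
  assumes x: "x \<in> ball 0 1" and P': "(P has_real_derivative P') (at (x \<bullet> x))"
  shows "frechet_derivative (\<lambda>y. frechet_derivative (graph_map f) (at y) v) (at x) u
     = (0, 2 * (2 * P' * (x \<bullet> u) * (x \<bullet> v) + P (x \<bullet> x) * (u \<bullet> v)))"
proof -
  from has_derivative_radial[OF P']
  have "((\<lambda>y. (v, 2 * P (y \<bullet> y) * (y \<bullet> v))) has_derivative
      (\<lambda>u. (0, 2 * (2 * P' * (x \<bullet> u) * (x \<bullet> v) + P (x \<bullet> x) * (u \<bullet> v))))) (at x)"
    by (auto intro!: derivative_eq_intros simp: algebra_simps)
  then have "((\<lambda>y. frechet_derivative (graph_map f) (at y) v) has_derivative
      (\<lambda>u. (0, 2 * (2 * P' * (x \<bullet> u) * (x \<bullet> v) + P (x \<bullet> x) * (u \<bullet> v))))) (at x)"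
    by (rule has_derivative_transform_within_open[OF _ open_ball x])
      (simp add: frechet_derivative_graph_map)
  then show ?thesis
    by (simp add: frechet_derivative_at[symmetric])
qed

lemma hyp_grad_eq:
  assumes "x \<in> ball 0 1"
  shows "hyp_grad f x = ((1 - x \<bullet> x)\<^sup>2 / 2 * P (x \<bullet> x)) *\<^sub>R x"
  using frechet_derivative_at[OF has_derivative_f[OF assms], symmetric]
  by (simp add: hyp_grad_def vec_eq_iff inner_axis power2_norm_eq_inner)

lemma hyp_metric_hyp_grad:
  assumes "x \<in> ball 0 1"
  shows "hyp_metric x (hyp_grad f x) (hyp_grad f x) = radial_grad_sq P (x \<bullet> x)"
proof -
  have alg: "4 * ((y\<^sup>2 / 2 * p)\<^sup>2 * s) / y\<^sup>2 = y\<^sup>2 * p\<^sup>2 * s" if "y \<noteq> 0" for y p s :: real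
    using that by (simp add: field_simps power2_eq_square)
  have "1 - x \<bullet> x \<noteq> 0"
    using inner_self_less_one[OF assms] by simp
  from alg[OF this, of "P (x \<bullet> x)" "x \<bullet> x"] show ?thesis
    unfolding hyp_metric_def hyp_grad_eq[OF assms] radial_grad_sq_def power2_norm_eq_inner
    by (simp add: power_mult_distrib power2_eq_square)
qed

lemma hyp_grad_norm_sq:
  assumes "x \<in> ball 0 1"
  shows "(hyp_grad_norm f x)\<^sup>2 = radial_grad_sq P (x \<bullet> x)"
  using hyp_metric_hyp_grad[OF assms]
  by (simp add: hyp_grad_norm_def radial_grad_sq_def)

lemma spacelike_at:
  assumes x: "x \<in> ball 0 1" and sl: "radial_grad_sq P (x \<bullet> x) < 1" and u: "u \<noteq> 0"
  shows "lor_metric (graph_map f x) (frechet_derivative (graph_map f) (at x) u)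
    (frechet_derivative (graph_map f) (at x) u) > 0"
proof -
  let ?s = "x \<bullet> x" and ?p = "P (x \<bullet> x)"
  have y: "(1 - ?s)\<^sup>2 > 0"
    using inner_self_less_one[OF x] by simp
  have "(2 * ?p * (x \<bullet> u))\<^sup>2 \<le> 4 * ?p\<^sup>2 * (?s * (u \<bullet> u))"
    using Cauchy_Schwarz_ineq[of x u] by (simp add: power_mult_distrib mult_left_mono)
  also have "\<dots> < 4 * (u \<bullet> u) / (1 - ?s)\<^sup>2"
  proof -
    have "(1 - ?s)\<^sup>2 * (4 * ?p\<^sup>2 * (?s * (u \<bullet> u))) = 4 * (u \<bullet> u) * radial_grad_sq P ?s"
      by (simp add: radial_grad_sq_def algebra_simps)
    also have "\<dots> < 4 * (u \<bullet> u)"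
      using sl u by simp
    finally show ?thesis
      using y by (simp add: field_simps)
  qed
  finally show ?thesis
    unfolding frechet_derivative_graph_map[OF x] lor_metric_eq
    by (simp add: graph_map_def power2_eq_square ac_simps)
qed

lemma unit_normal_eq:
  assumes "x \<in> ball 0 1"
  shows "unit_normal f x = (- 1 / radial_tilt P (x \<bullet> x)) *\<^sub>R (((1 - x \<bullet> x)\<^sup>2 / 2 * P (x \<bullet> x)) *\<^sub>R x, 1)"
  unfolding unit_normal_def hyp_grad_norm_sq[OF assms] hyp_grad_eq[OF assms] radial_tilt_def
  by simp

lemma lor_metric_unit_normal:
  assumes x: "x \<in> ball 0 1" and sl: "radial_grad_sq P (x \<bullet> x) < 1"
  shows "lor_metric (graph_map f x) (unit_normal f x) (unit_normal f x) = -1"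
proof -
  have alg: "a\<^sup>2 * G - a * a = -1" if "a = - (1 / sqrt (1 - G))" "G < 1" for a G :: real
  proof -
    have "a\<^sup>2 = 1 / (1 - G)"
      using that by (simp add: power_divide)
    with \<open>G < 1\<close> show ?thesis
      by (simp add: power2_eq_square[symmetric] field_simps)
  qed
  have "hyp_metric x (- (a *\<^sub>R u)) (- (a *\<^sub>R u)) = a\<^sup>2 * hyp_metric x u u" for a u
    by (simp add: hyp_metric_def power2_eq_square)
  then show ?thesis
    using alg[OF refl, of "radial_grad_sq P (x \<bullet> x)"] sl
    unfolding unit_normal_def lor_metric_def hyp_grad_norm_sq[OF x]
    by (simp add: graph_map_def hyp_metric_hyp_grad[OF x])
qed

lemma induced_metric_eq:
  assumes x: "x \<in> ball 0 1"
  shows "induced_metric f x = diag_outer x (4 / (1 - x \<bullet> x)\<^sup>2) (- 4 * (P (x \<bullet> x))\<^sup>2)"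
proof -
  have "induced_metric f x $ i $ j = 4 * (if i = j then 1 else 0) / (1 - x \<bullet> x)\<^sup>2
      - (2 * P (x \<bullet> x) * x $ i) * (2 * P (x \<bullet> x) * x $ j)" for i j
    unfolding induced_metric_def
    by (simp add: frechet_derivative_graph_map[OF x] lor_metric_eq graph_map_def inner_axis
        inner_axis_axis axis_component)
  then show ?thesis
    by (simp add: diag_outer_def vec_eq_iff power2_eq_square algebra_simps)
qed

lemma cov_deriv_axis:
  assumes x: "x \<in> ball 0 1" and P': "(P has_real_derivative P') (at (x \<bullet> x))"
  shows "cov_deriv_imm lor_metric (graph_map f) x (axis i 1) (axis j 1) =
    ((2 / (1 - x \<bullet> x)) *\<^sub>R (x $ i *\<^sub>R axis j 1 + x $ j *\<^sub>R axis i 1 - (if i = j then 1 else 0) *\<^sub>R x),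
     2 * (2 * P' * x $ i * x $ j + P (x \<bullet> x) * (if i = j then 1 else 0)))"
  using inner_self_less_one[OF x]
  unfolding cov_deriv_imm_def frechet_derivative_graph_map_direction[OF x P']
  by (simp add: christoffel_lor_metric graph_map_def frechet_derivative_graph_map[OF x]
      inner_axis inner_axis_axis axis_component)

lemma lor_metric_sff_axis:
  assumes x: "x \<in> ball 0 1" and P': "(P has_real_derivative P') (at (x \<bullet> x))"
    and sl: "radial_grad_sq P (x \<bullet> x) < 1"
  shows "lor_metric (graph_map f x) (sff f x (axis i 1) (axis j 1)) (unit_normal f x)
    = diag_outer x (2 * P (x \<bullet> x) * (1 + x \<bullet> x) / ((1 - x \<bullet> x) * radial_tilt P (x \<bullet> x)))
        ((4 * P' - 8 * P (x \<bullet> x) / (1 - x \<bullet> x)) / radial_tilt P (x \<bullet> x)) $ i $ j"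
proof -
  define y where "y = 1 - x \<bullet> x"
  have xx: "x \<bullet> x = 1 - y"
    by (simp add: y_def)
  have "y \<noteq> 0" "radial_tilt P (1 - y) \<noteq> 0"
    using inner_self_less_one[OF x] sl by (auto simp: y_def radial_tilt_def)
  have "lor_metric (graph_map f x) (sff f x (axis i 1) (axis j 1)) (unit_normal f x)
      = lor_metric (graph_map f x) (cov_deriv_imm lor_metric (graph_map f) x (axis i 1) (axis j 1))
          (unit_normal f x)"
    unfolding sff_def Let_def lor_metric_scaleR_left lor_metric_unit_normal[OF x sl] by simp
  also have "\<dots> = diag_outer x (2 * P (x \<bullet> x) * (1 + x \<bullet> x) / ((1 - x \<bullet> x) * radial_tilt P (x \<bullet> x)))
        ((4 * P' - 8 * P (x \<bullet> x) / (1 - x \<bullet> x)) / radial_tilt P (x \<bullet> x)) $ i $ j"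
    unfolding cov_deriv_axis[OF x P'] unit_normal_eq[OF x] lor_metric_eq diag_outer_def
    using \<open>y \<noteq> 0\<close> \<open>radial_tilt P (1 - y) \<noteq> 0\<close>
    by (simp add: xx graph_map_def inner_add_left inner_diff_left inner_axis' axis_component
        field_simps power2_eq_square)
  finally show ?thesis .
qed


lemma matrix_inv_induced_metric:
  assumes x: "x \<in> ball 0 1" and sl: "radial_grad_sq P (x \<bullet> x) < 1"
  defines "s \<equiv> x \<bullet> x" and "W \<equiv> radial_tilt P (x \<bullet> x)"
  shows "matrix_inv (induced_metric f x)
    = diag_outer x ((1 - s)\<^sup>2 / 4) ((P s)\<^sup>2 * (1 - s) ^ 4 / (4 * W\<^sup>2))"
proof -
  define y where "y = 1 - s"
  have "W > 0" and W2: "W\<^sup>2 = 1 - y\<^sup>2 * (P s)\<^sup>2 * s"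
    using sl by (auto simp: s_def W_def y_def radial_tilt_def radial_grad_sq_def)
  moreover have "y \<noteq> 0"
    using inner_self_less_one[OF x] by (auto simp: s_def y_def)
  ultimately have den: "4 / y\<^sup>2 + - 4 * (P s)\<^sup>2 * s = 4 * W\<^sup>2 / y\<^sup>2" "W \<noteq> 0"
    by (simp_all add: field_simps)
  then have nz: "4 / y\<^sup>2 \<noteq> 0" "4 / y\<^sup>2 + - 4 * (P s)\<^sup>2 * s \<noteq> 0"
    using \<open>y \<noteq> 0\<close> by simp_all
  have params: "1 / (4 / y\<^sup>2) = y\<^sup>2 / 4"
    "- (- 4 * (P s)\<^sup>2) / (4 / y\<^sup>2 * (4 / y\<^sup>2 + - 4 * (P s)\<^sup>2 * s)) = (P s)\<^sup>2 * y ^ 4 / (4 * W\<^sup>2)"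
    unfolding den(1) using \<open>y \<noteq> 0\<close> \<open>W \<noteq> 0\<close>
    by (simp_all add: field_simps power2_eq_square power4_eq_xxxx)
  have "matrix_inv (diag_outer x (4 / y\<^sup>2) (- 4 * (P s)\<^sup>2)) = diag_outer x (y\<^sup>2 / 4) ((P s)\<^sup>2 * y ^ 4 / (4 * W\<^sup>2))"
    using matrix_inv_diag_outer[of _ _ x, folded s_def, OF nz, unfolded params] .
  then show ?thesis
    unfolding induced_metric_eq[OF x] s_def[symmetric] y_def[symmetric] .
qed

lemma mean_curvature_eq:
  assumes x: "x \<in> ball 0 1" and P': "(P has_real_derivative P') (at (x \<bullet> x))"
    and sl: "radial_grad_sq P (x \<bullet> x) < 1"
  defines "s \<equiv> x \<bullet> x" and "W \<equiv> radial_tilt P (x \<bullet> x)" and "m \<equiv> real CARD('m)"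
  shows "lor_metric (graph_map f x) (mean_curv_vec f x) (unit_normal f x)
    = ((m - 1) * (1 - s\<^sup>2) * P s / (2 * W)
       + (1 - s) * (P s * (1 - 3 * s) + 2 * s * (1 - s) * P') / (2 * W ^ 3)) / m"
proof -
  define y where "y = 1 - s"
  define a b where "a = y\<^sup>2 / 4" and "b = (P s)\<^sup>2 * y ^ 4 / (4 * W\<^sup>2)"
  define A1 A2 where "A1 = 2 * P s * (1 + s) / (y * W)" and "A2 = (4 * P' - 8 * P s / y) / W"
  have "W > 0" and W2: "W\<^sup>2 = 1 - y\<^sup>2 * (P s)\<^sup>2 * s"
    using sl by (auto simp: s_def W_def y_def radial_tilt_def radial_grad_sq_def)
  have "y \<noteq> 0"
    using inner_self_less_one[OF x] by (auto simp: s_def y_def)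
  have "W \<noteq> 0"
    using \<open>W > 0\<close> by simp
  then have "a + b * s = y\<^sup>2 * (W\<^sup>2 + y\<^sup>2 * (P s)\<^sup>2 * s) / (4 * W\<^sup>2)"
    by (simp add: a_def b_def field_simps power2_eq_square power4_eq_xxxx)
  then have ab: "a + b * s = y\<^sup>2 / (4 * W\<^sup>2)"
    using W2 by simp
  have "lor_metric (graph_map f x) (mean_curv_vec f x) (unit_normal f x)
      = (\<Sum>i\<in>UNIV. \<Sum>j\<in>UNIV. diag_outer x a b $ i $ j * diag_outer x A1 A2 $ i $ j) / m"
    unfolding mean_curv_vec_def lor_metric_scaleR_left lor_metric_sum_left
      matrix_inv_induced_metric[OF x sl] lor_metric_sff_axis[OF x P' sl]
      a_def b_def A1_def A2_def y_def s_def W_def m_def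
    by simp
  also have "\<dots> = ((m - 1) * a * A1 + (a + b * s) * (A1 + A2 * s)) / m"
    unfolding sum_diag_outer_mult s_def[symmetric] m_def[symmetric]
    by (simp add: algebra_simps power2_eq_square)
  also have "\<dots> = ((m - 1) * (1 - s\<^sup>2) * P s / (2 * W)
       + (1 - s) * (P s * (1 - 3 * s) + 2 * s * (1 - s) * P') / (2 * W ^ 3)) / m"
  proof -
    have s_eq: "s = 1 - y"
      by (simp add: y_def)
    have "m > 0"
      by (simp add: m_def)
    then show ?thesis
      unfolding ab unfolding a_def A1_def A2_def s_eq using \<open>y \<noteq> 0\<close> \<open>W \<noteq> 0\<close>
      by (simp add: field_simps power2_eq_square power3_eq_cube)
  qed
  finally show ?thesis .
qed

end

section \<open>The graphs of \<open>f_c\<close>\<close>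

lemma psi_fun_has_derivative:
  assumes s: "s \<in> psi_dom m c" and B': "(B_fun m c has_real_derivative B') (at s)"
  defines "B \<equiv> B_fun m c s"
  defines "R \<equiv> sqrt (1 + s * B\<^sup>2)"
  shows "(psi_fun m c has_real_derivative
      (B' * ((1 - s) * R) - B * (- R + (1 - s) * ((B\<^sup>2 + s * (2 * B * B')) / (2 * R))))
        / ((1 - s) * R)\<^sup>2) (at s)"
proof -
  have "s < 1" "0 < 1 + s * B\<^sup>2"
    using s by (auto simp: psi_dom_def B_def)
  have "((\<lambda>q. sqrt (1 + q * (B_fun m c q)\<^sup>2)) has_real_derivative (B\<^sup>2 + s * (2 * B * B')) / (2 * R)) (at s)"
    using \<open>0 < 1 + s * B\<^sup>2\<close> B'
    by (auto intro!: derivative_eq_intros simp: B_def R_def power2_eq_square) (simp add: field_simps)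
  from DERIV_mult[OF DERIV_diff[OF DERIV_const[of 1] DERIV_ident] this]
  have den': "((\<lambda>q. (1 - q) * sqrt (1 + q * (B_fun m c q)\<^sup>2)) has_real_derivative
      - R + (1 - s) * ((B\<^sup>2 + s * (2 * B * B')) / (2 * R))) (at s)"
    by (simp add: R_def B_def mult.commute)
  moreover have "(1 - s) * sqrt (1 + s * (B_fun m c s)\<^sup>2) \<noteq> 0"
    using \<open>s < 1\<close> \<open>0 < 1 + s * B\<^sup>2\<close> by (simp add: B_def)
  ultimately show ?thesis
    using DERIV_divide[OF B' den'] unfolding psi_fun_def[abs_def]
    by (simp add: B_def R_def power2_eq_square)
qed

lemma one_minus_radial_grad_sq_psi_fun:
  assumes "0 \<le> s" "s < 1"
  shows "1 - radial_grad_sq (psi_fun m c) s = 1 / (1 + s * (B_fun m c s)\<^sup>2)"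
proof -
  have R: "0 < 1 + s * (B_fun m c s)\<^sup>2"
    using assms by (simp add: add_pos_nonneg)
  with assms have "radial_grad_sq (psi_fun m c) s = s * (B_fun m c s)\<^sup>2 / (1 + s * (B_fun m c s)\<^sup>2)"
    by (simp add: radial_grad_sq_def psi_fun_def power_divide power_mult_distrib)
  with R show ?thesis
    by (simp add: field_simps)
qed

lemma radial_grad_sq_psi_fun_less_one:
  assumes "0 \<le> s" "s < 1"
  shows "radial_grad_sq (psi_fun m c) s < 1"
proof -
  have "0 < 1 / (1 + s * (B_fun m c s)\<^sup>2)"
    using assms by (simp add: add_pos_nonneg)
  with one_minus_radial_grad_sq_psi_fun[OF assms, of m c] show ?thesis
    by linarith
qed

lemma radial_tilt_psi_fun:
  assumes "0 \<le> s" "s < 1"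
  shows "radial_tilt (psi_fun m c) s = 1 / sqrt (1 + s * (B_fun m c s)\<^sup>2)"
  by (simp add: radial_tilt_def one_minus_radial_grad_sq_psi_fun[OF assms] real_sqrt_divide)

text \<open>With \<open>P = psi_fun\<close> the tilt is \<open>1 / R\<close>, and the closed formula of \<open>mean_curvature_eq\<close>
  collapses to the left-hand side of \<open>B_fun_ode\<close>.\<close>

lemma mean_curvature_psi_identity:
  fixes s B B' m :: real
  assumes "0 \<le> s" "s < 1"
  defines "R \<equiv> sqrt (1 + s * B\<^sup>2)"
  defines "p \<equiv> B / ((1 - s) * R)"
    and "p' \<equiv> (B' * ((1 - s) * R) - B * (- R + (1 - s) * ((B\<^sup>2 + s * (2 * B * B')) / (2 * R))))
        / ((1 - s) * R)\<^sup>2"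
  shows "(m - 1) * (1 - s\<^sup>2) * p / (2 * (1 / R)) + (1 - s) * (p * (1 - 3 * s) + 2 * s * (1 - s) * p')
      / (2 * (1 / R) ^ 3) = (1 - s) * (B / 2 + s * B') + (m - 1) * (1 + s) * B / 2"
proof -
  have "R > 0" and R2: "R\<^sup>2 = 1 + s * B\<^sup>2"
    using assms(1,2) by (simp_all add: R_def add_pos_nonneg)
  have "1 - s \<noteq> 0"
    using assms(2) by simp
  define y where "y = 1 - s"
  have "y \<noteq> 0" and s_eq: "s = 1 - y"
    using assms(2) by (simp_all add: y_def)
  have "(p * (1 - 3 * s) + 2 * s * (1 - s) * p') * R ^ 3
      = (R\<^sup>2 * (B * (1 - 3 * s) + 2 * s * (1 - s) * B' + 2 * s * B)
         - s * (1 - s) * B * (B\<^sup>2 + 2 * s * B * B')) / (1 - s)"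
    unfolding p_def p'_def s_eq using \<open>R > 0\<close> \<open>y \<noteq> 0\<close>
    by (simp add: field_simps power2_eq_square power3_eq_cube)
  also have "\<dots> = B + 2 * s * B'"
    unfolding R2 using \<open>1 - s \<noteq> 0\<close> by (simp add: field_simps power2_eq_square)
  finally have X: "(p * (1 - 3 * s) + 2 * s * (1 - s) * p') * R ^ 3 = B + 2 * s * B'" .
  have "(1 - s) * (p * (1 - 3 * s) + 2 * s * (1 - s) * p') / (2 * (1 / R) ^ 3)
      = (1 - s) * ((p * (1 - 3 * s) + 2 * s * (1 - s) * p') * R ^ 3) / 2"
    using \<open>R > 0\<close> by (simp add: power_one_over)
  also have "\<dots> = (1 - s) * (B / 2 + s * B')"
    unfolding X by (simp add: field_simps)
  moreover have "(m - 1) * (1 - s\<^sup>2) * p / (2 * (1 / R)) = (m - 1) * (1 + s) * B / 2"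
    using \<open>R > 0\<close> \<open>1 - s \<noteq> 0\<close> by (simp add: p_def field_simps power2_eq_square)
  ultimately show ?thesis
    by simp
qed

lemma spacelike_graph_psi_fun:
  assumes "radial_graph f \<phi> (psi_fun m c)"
  shows "spacelike_graph f"
  unfolding spacelike_graph_def ball_model_def
proof (intro ballI allI impI)
  fix x u :: "real^'a" assume "x \<in> ball 0 1" "u \<noteq> 0"
  moreover have "radial_grad_sq (psi_fun m c) (x \<bullet> x) < 1"
    using inner_self_less_one[OF \<open>x \<in> ball 0 1\<close>] by (intro radial_grad_sq_psi_fun_less_one) simp_all
  ultimately show "lor_metric (graph_map f x) (frechet_derivative (graph_map f) (at x) u)
      (frechet_derivative (graph_map f) (at x) u) > 0"
    using radial_graph.spacelike_at[OF assms] by blast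
qed

lemma mean_curvature_psi_fun:
  fixes x :: "real^'m"
  assumes "radial_graph f \<phi> (psi_fun CARD('m) c)" "CARD('m) \<ge> 2" "x \<in> ball 0 1"
  shows "lor_metric (graph_map f x) (mean_curv_vec f x) (unit_normal f x) = c / real CARD('m)"
proof -
  let ?m = "CARD('m)"
  define s where "s = x \<bullet> x"
  have s: "0 \<le> s" "s < 1"
    using inner_self_less_one[OF assms(3)] by (simp_all add: s_def)
  then have "s \<in> psi_dom ?m c"
    using atLeastLessThan_subset_psi_dom[of ?m c] by auto
  then have "s \<in> {-1<..<1}"
    by (simp add: psi_dom_def)
  from B_fun_has_derivative[OF assms(2) this]
  obtain B' where B': "(B_fun ?m c has_real_derivative B') (at s)"
    by blast
  note mc = radial_graph.mean_curvature_eq[OF assms(1) assms(3)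
      psi_fun_has_derivative[OF \<open>s \<in> psi_dom ?m c\<close> B', unfolded s_def]
      radial_grad_sq_psi_fun_less_one[OF s, unfolded s_def], folded s_def]
  note identity = mean_curvature_psi_identity[OF s, where B = "B_fun ?m c s" and B' = B' and m = "real ?m"]
  have "lor_metric (graph_map f x) (mean_curv_vec f x) (unit_normal f x)
      = ((1 - s) * (B_fun ?m c s / 2 + s * B') + (real ?m - 1) * (1 + s) * B_fun ?m c s / 2) / real ?m"
    using mc identity unfolding radial_tilt_psi_fun[OF s] psi_fun_def by simp
  also have "\<dots> = c / real ?m"
    using B_fun_ode[OF assms(2) \<open>s \<in> {-1<..<1}\<close> B'] assms(2) by (simp add: of_nat_diff)
  finally show ?thesis .
qed

theorem proposition1p3:
  fixes c :: real
  assumes "CARD('m) \<ge> 2"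
  shows "smooth_on (ball_model :: (real^'m) set) (f_fun c)
    \<and> (\<forall>d::real. spacelike_graph (\<lambda>x::real^'m. f_fun c x + d)
         \<and> (\<forall>x::real^'m\<in>ball_model. lor_metric (graph_map (\<lambda>y. f_fun c y + d) x)
               (mean_curv_vec (\<lambda>y. f_fun c y + d) x) (unit_normal (\<lambda>y. f_fun c y + d) x)
             = c / real CARD('m)))
    \<and> bij_betw (\<lambda>(x::real^'m, d). graph_map (\<lambda>y. f_fun c y + d) x)
         (ball_model \<times> UNIV) (ball_model \<times> UNIV)"
proof (intro conjI allI ballI)
  obtain D \<phi> where D: "open D" "{0..<1} \<subseteq> D" "smooth_real_on D \<phi>"
    and \<phi>': "\<And>q. q \<in> D \<Longrightarrow> (\<phi> has_real_derivative psi_fun CARD('m) c q) (at q)"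
    and f_eq: "\<And>x::real^'m. x \<in> ball_model \<Longrightarrow> f_fun c x = \<phi> (x \<bullet> x)"
    by (rule f_fun_radial_profile[where c = c, OF assms]) blast
  show "smooth_on (ball_model :: (real^'m) set) (f_fun c)"
    unfolding ball_model_def
    by (rule smooth_on_radial[OF D(3,1,2)]) (use f_eq in \<open>simp add: ball_model_def\<close>)
  fix d :: real
  have graph: "radial_graph (\<lambda>x::real^'m. f_fun c x + d) (\<lambda>q. \<phi> q + d) (psi_fun CARD('m) c)"
  proof
    show "f_fun c x + d = \<phi> (x \<bullet> x) + d" if "x \<in> ball 0 1" for x :: "real^'m"
      using f_eq that by (simp add: ball_model_def)
    show "((\<lambda>q. \<phi> q + d) has_real_derivative psi_fun CARD('m) c s) (at s)" if "s \<in> {0..<1}" for s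
      using \<phi>' D(2) that by (auto intro!: derivative_eq_intros)
  qed
  show "spacelike_graph (\<lambda>x::real^'m. f_fun c x + d)"
    using spacelike_graph_psi_fun[OF graph] .
  show "lor_metric (graph_map (\<lambda>y. f_fun c y + d) x) (mean_curv_vec (\<lambda>y. f_fun c y + d) x)
      (unit_normal (\<lambda>y. f_fun c y + d) x) = c / real CARD('m)" if "x \<in> ball_model" for x :: "real^'m"
    using mean_curvature_psi_fun[OF graph assms] that by (simp add: ball_model_def)
next
  show "bij_betw (\<lambda>(x::real^'m, d). graph_map (\<lambda>y. f_fun c y + d) x) (ball_model \<times> UNIV) (ball_model \<times> UNIV)"
    by (rule bij_betw_byWitness[where f' = "\<lambda>(x, t). (x, t - f_fun c x)"]) (auto simp: graph_map_def)
qed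

end
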